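(* Let $k,n$ be non-negative integers and $m\in\{0,1\}$. Let $p_1,\dots,p_{k+1}$ be primes (not necessarily distinct) with each $p_i\equiv 3,5,$ or $7\pmod 8$. Then for every integer $j$ not divisible by $p_{k+1}$, $$\mathcal{J}^*_{6}\Big(3^m p_1^2p_2^2\cdots p_k^2\,p_{k+1}\,\big(8p_{k+1}n+8j+p_{k+1}\big)\Big)\equiv 0\pmod 2.$$
   Context: Let $q=e^{2\pi i\tau}$, $(a;q)_\infty=\prod_{j\ge0}(1-aq^j)$, and $\eta(\tau)=q^{1/24}(q;q)_\infty$. Define $$j_6^{*}(\tau)=\left(\frac{\eta(\tau)\eta(3\tau)}{\eta(2\tau)\eta(6\tau)}\right)^6+6+2^6\left(\frac{\eta(2\tau)\eta(6\tau)}{\eta(\tau)\eta(3\tau)}\right)^6 = \frac1q+\sum_{n\ge 0}\mathcal{J}^*_6(n)q^n.$$ *)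

theory Defs
  imports "HOL-Computational_Algebra.Formal_Power_Series"
begin

text \<open>The q-Pochhammer symbol (q^a;q^a)_infinity = prod_{j>=0} (1 - q^(a(j+1))) as a formal
  power series in q.  Its N-th coefficient only depends on the factors with a(j+1) <= N,
  so it is the N-th coefficient of the finite product over j < N+1.\<close>
definition qpoch :: "nat \<Rightarrow> rat fps" where
  "qpoch a = Abs_fps (\<lambda>N. fps_nth (\<Prod>j<N+1. 1 - fps_X ^ (a * (j + 1))) N)"

text \<open>P = (q;q)(q^3;q^3) / ((q^2;q^2)(q^6;q^6)), so that
  (eta(tau)eta(3tau)/(eta(2tau)eta(6tau)))^6 = q^(-1) P^6.\<close>
definition Pfps :: "rat fps" where
  "Pfps = qpoch 1 * qpoch 3 * inverse (qpoch 2 * qpoch 6)"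

text \<open>Coefficient of q^N (N any integer) in
  j6*(tau) = q^(-1) P^6 + 6 + 64 q P^(-6).  For N >= 0 this is J*_6(N).\<close>
definition Jstar6 :: "int \<Rightarrow> rat" where
  "Jstar6 N = (if N < -1 then 0 else
      fps_nth (Pfps ^ 6) (nat (N + 1))
      + (if N = 0 then 6 else 0)
      + (if N \<ge> 1 then 64 * fps_nth (inverse Pfps ^ 6) (nat (N - 1)) else 0))"

end

theory Submission
  imports Defs "HOL-Library.Z2" "HOL-Library.Disjoint_Sets"
begin

text \<open>Work modulo 2. There \<open>(q^a;q^a)\<^sub>\<infinity>\<close> becomes \<open>E_a = \<Prod>\<^sub>j (1 + q^(a j))\<close>, Frobenius gives
  \<open>E_(2a) = E_a\<^sup>2\<close>, and Jacobi's identity gives \<open>E_a\<^sup>3 = \<psi>(q^a)\<close>, the sum of \<open>q^(a t)\<close> over the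
  triangular numbers \<open>t\<close>. Pairing off the representations \<open>8n + 4 = x\<^sup>2 + 3y\<^sup>2\<close> with \<open>x, y\<close> odd
  by an involution shows \<open>\<psi>(q) \<psi>(q^3) = \<psi>(q)^4 + q \<psi>(q^3)^4\<close>, hence \<open>1 / (\<psi>(q) \<psi>(q^3))\<close> is a
  sum of fourth powers plus \<open>q \<psi>(q)^4 + q\<^sup>2 \<psi>(q^3)^4\<close>. As \<open>P^6 = (E_1 E_3)^(-6)\<close> is the square of
  that reciprocal, for \<open>N = 3^m (8d + 1)\<close> the coefficient of \<open>q^N\<close> in \<open>q^(-1) P^6\<close> is odd exactly
  when \<open>d\<close> is triangular, i.e. when \<open>8d + 1\<close> is a square; the term \<open>64 q P^(-6)\<close> is even.
  For the arguments of the theorem, \<open>8d + 1 = s\<^sup>2 p\<^sub>k w\<close> with \<open>p\<^sub>k \<nmid> w\<close>, which is not a square.\<close>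

unbundle fps_syntax
declare add_bit_eq_xor [simp del] mult_bit_eq_and [simp del]

definition fps_eq_upto :: "nat \<Rightarrow> 'a fps \<Rightarrow> 'a fps \<Rightarrow> bool" where
  "fps_eq_upto d f g \<longleftrightarrow> (\<forall>i\<le>d. f $ i = g $ i)"

lemma fps_eq_upto_refl [simp]: "fps_eq_upto d f f"
  by (simp add: fps_eq_upto_def)

lemma fps_eq_upto_sym: "fps_eq_upto d f g \<Longrightarrow> fps_eq_upto d g f"
  by (simp add: fps_eq_upto_def)

lemma fps_eq_upto_trans [trans]: "fps_eq_upto d f g \<Longrightarrow> fps_eq_upto d g h \<Longrightarrow> fps_eq_upto d f h"
  by (simp add: fps_eq_upto_def)

lemma fps_eq_upto_imp_eq: "(\<And>d. fps_eq_upto d f g) \<Longrightarrow> f = g"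
  by (auto simp: fps_eq_upto_def intro!: fps_ext)

lemma fps_eq_upto_add:
  "fps_eq_upto d f g \<Longrightarrow> fps_eq_upto d f' g' \<Longrightarrow> fps_eq_upto d (f + f') (g + g')"
  by (simp add: fps_eq_upto_def)

lemma fps_eq_upto_mult:
  fixes f g f' g' :: "'a::semiring_0 fps"
  shows "fps_eq_upto d f g \<Longrightarrow> fps_eq_upto d f' g' \<Longrightarrow> fps_eq_upto d (f * f') (g * g')"
  unfolding fps_eq_upto_def fps_mult_nth by (auto intro!: sum.cong)

lemma fps_eq_upto_sum:
  "(\<And>j. j \<in> S \<Longrightarrow> fps_eq_upto d (f j) (g j)) \<Longrightarrow> fps_eq_upto d (\<Sum>j\<in>S. f j) (\<Sum>j\<in>S. g j)"
  by (induct S rule: infinite_finite_induct) (auto intro: fps_eq_upto_add)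

lemma fps_eq_upto_prod:
  fixes f g :: "'b \<Rightarrow> 'a::comm_semiring_1 fps"
  shows "(\<And>j. j \<in> S \<Longrightarrow> fps_eq_upto d (f j) (g j)) \<Longrightarrow> fps_eq_upto d (\<Prod>j\<in>S. f j) (\<Prod>j\<in>S. g j)"
  by (induct S rule: infinite_finite_induct) (auto intro: fps_eq_upto_mult)

lemma fps_eq_upto_one_plus_X_power: "d < m \<Longrightarrow> fps_eq_upto d (1 + fps_X ^ m) 1"
  by (auto simp: fps_eq_upto_def)

lemma fps_eq_upto_X_power_mult: "d < m \<Longrightarrow> fps_eq_upto d (fps_X ^ m * f) 0"
  by (auto simp: fps_eq_upto_def fps_X_power_mult_nth)

lemma fps_eq_upto_mult_cancel:
  fixes f g h :: "'a::field fps"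
  assumes "fps_eq_upto d (f * h) (g * h)" "h $ 0 \<noteq> 0"
  shows "fps_eq_upto d f g"
proof -
  have "fps_eq_upto d (f * h * inverse h) (g * h * inverse h)"
    using assms(1) by (rule fps_eq_upto_mult) simp
  then show ?thesis
    using inverse_mult_eq_1'[OF assms(2)] by (simp add: mult.assoc)
qed

lemma bit_fps_two [simp]: "(2::bit fps) = 0"
  by (rule fps_ext) (simp add: fps_numeral_nth)

lemma bit_fps_minus_eq_add: "(f::bit fps) - g = f + g"
  by (rule fps_ext) simp

lemma bit_fps_power2_add: "((f::bit fps) + g) ^ 2 = f ^ 2 + g ^ 2"
  by (simp add: power2_sum)

lemma bit_fps_power3_add: "((f::bit fps) + g) ^ 3 = f ^ 3 + f ^ 2 * g + f * g ^ 2 + g ^ 3"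
proof -
  have "(3::bit fps) = 1"
    by (rule fps_ext) (simp add: fps_numeral_nth)
  moreover have "(f + g) ^ 3 = f ^ 3 + 3 * f ^ 2 * g + 3 * f * g ^ 2 + g ^ 3"
    by (simp add: power3_eq_cube power2_eq_square algebra_simps)
  ultimately show ?thesis by simp
qed

lemma sum_bit_fixed_points:
  assumes "\<And>x. x \<in> S \<Longrightarrow> \<sigma> x \<in> S" "\<And>x. x \<in> S \<Longrightarrow> \<sigma> (\<sigma> x) = x"
    and "\<And>x. x \<in> S \<Longrightarrow> f (\<sigma> x) = f x" and "finite S"
  shows "(\<Sum>x\<in>S. f x :: bit) = (\<Sum>x\<in>{x\<in>S. \<sigma> x = x}. f x)"
proof -
  have "(\<Sum>x\<in>{x\<in>S. \<sigma> x \<noteq> x}. f x) = 0"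
    using assms(1-3) by (intro sum_involution_eq_0[where h = \<sigma>]) auto
  moreover have "S = {x\<in>S. \<sigma> x = x} \<union> {x\<in>S. \<sigma> x \<noteq> x}" by auto
  ultimately show ?thesis
    using assms(4) by (metis (no_types, lifting) add_0_right sum.union_disjoint
        disjoint_iff finite_Un mem_Collect_eq)
qed

lemma bit_fps_power2_nth: "((h::bit fps) ^ 2) $ n = (if even n then h $ (n div 2) else 0)"
proof -
  have "(h ^ 2) $ n = (\<Sum>i\<in>{0..n}. h $ i * h $ (n - i))"
    by (simp add: power2_eq_square fps_mult_nth)
  also have "\<dots> = (\<Sum>i\<in>{i\<in>{0..n}. n - i = i}. h $ i * h $ (n - i))"
    by (rule sum_bit_fixed_points[where \<sigma> = "\<lambda>i. n - i"]) (auto simp: mult.commute)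
  also have "{i\<in>{0..n}. n - i = i} = (if even n then {n div 2} else {})"
    by auto presburger+
  finally show ?thesis by (auto elim!: evenE)
qed

lemma bit_fps_power4_nth: "((h::bit fps) ^ 4) $ n = (if 4 dvd n then h $ (n div 4) else 0)"
proof -
  have "h ^ 4 = (h ^ 2) ^ 2" by (simp flip: power_mult)
  moreover have "even n \<and> even (n div 2) \<longleftrightarrow> 4 dvd n" by presburger
  ultimately show ?thesis
    by (simp only: bit_fps_power2_nth div_mult2_eq) auto
qed

definition int_coeffs :: "'a::floor_ceiling fps \<Rightarrow> bool" where
  "int_coeffs f \<longleftrightarrow> (\<forall>n. f $ n \<in> \<int>)"

text \<open>Only meaningful for \<open>int_coeffs f\<close>; the floor just makes it total.\<close>

definition fps_mod2 :: "'a::floor_ceiling fps \<Rightarrow> bit fps" where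
  "fps_mod2 f = Abs_fps (\<lambda>n. of_int \<lfloor>f $ n\<rfloor>)"

lemma fps_mod2_nth: "fps_mod2 f $ n = of_int \<lfloor>f $ n\<rfloor>"
  by (simp add: fps_mod2_def)

lemma int_coeffs_nth_eq_floor: "int_coeffs f \<Longrightarrow> f $ n = of_int \<lfloor>f $ n\<rfloor>"
  unfolding int_coeffs_def by (metis Ints_cases floor_of_int)

lemma int_coeffs_one [simp]: "int_coeffs 1"
  and int_coeffs_X_power [simp]: "int_coeffs (fps_X ^ m)"
  by (auto simp: int_coeffs_def)

lemma int_coeffs_diff: "int_coeffs f \<Longrightarrow> int_coeffs g \<Longrightarrow> int_coeffs (f - g)"
  by (auto simp: int_coeffs_def)

lemma int_coeffs_mult: "int_coeffs f \<Longrightarrow> int_coeffs g \<Longrightarrow> int_coeffs (f * g)"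
  unfolding int_coeffs_def fps_mult_nth by (auto intro!: Ints_sum Ints_mult)

lemma int_coeffs_prod: "(\<And>j. j \<in> S \<Longrightarrow> int_coeffs (f j)) \<Longrightarrow> int_coeffs (\<Prod>j\<in>S. f j)"
  by (induct S rule: infinite_finite_induct) (auto intro: int_coeffs_mult)

lemma int_coeffs_power: "int_coeffs f \<Longrightarrow> int_coeffs (f ^ n)"
  by (induct n) (auto intro: int_coeffs_mult)

lemma int_coeffs_inverse:
  assumes "int_coeffs f" "f $ 0 = 1"
  shows "int_coeffs (inverse f)"
proof -
  have "inverse f $ n \<in> \<int>" for n
  proof (induct n rule: less_induct)
    case (less n)
    show ?case
    proof (cases n)
      case (Suc n')
      have "(f * inverse f) $ n = 0"
        using assms(2) Suc by (simp add: inverse_mult_eq_1')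
      then have "(\<Sum>i=0..n. f $ i * inverse f $ (n - i)) = 0"
        by (simp add: fps_mult_nth)
      then have "inverse f $ n = - (\<Sum>i=1..n. f $ i * inverse f $ (n - i))"
        using assms(2) by (simp add: sum.atLeast_Suc_atMost Suc)
      moreover have "(\<Sum>i=1..n. f $ i * inverse f $ (n - i)) \<in> \<int>"
        using assms(1) less by (intro Ints_sum Ints_mult) (auto simp: int_coeffs_def)
      ultimately show ?thesis by simp
    qed (use assms(2) in simp)
  qed
  then show ?thesis by (simp add: int_coeffs_def)
qed

lemma fps_mod2_one [simp]: "fps_mod2 1 = 1"
  by (rule fps_ext) (simp add: fps_mod2_nth)

lemma fps_mod2_one_minus_X_power: "fps_mod2 (1 - fps_X ^ m) = 1 + fps_X ^ m"
  by (rule fps_ext) (simp add: fps_mod2_nth)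

lemma fps_mod2_mult:
  assumes "int_coeffs f" "int_coeffs g"
  shows "fps_mod2 (f * g) = fps_mod2 f * fps_mod2 g"
proof (rule fps_ext)
  fix n
  have "(f * g) $ n = of_int (\<Sum>i=0..n. \<lfloor>f $ i\<rfloor> * \<lfloor>g $ (n - i)\<rfloor>)"
    unfolding fps_mult_nth of_int_sum of_int_mult
    using int_coeffs_nth_eq_floor[OF assms(1)] int_coeffs_nth_eq_floor[OF assms(2)]
    by (intro sum.cong) auto
  then have "fps_mod2 (f * g) $ n = (of_int (\<Sum>i=0..n. \<lfloor>f $ i\<rfloor> * \<lfloor>g $ (n - i)\<rfloor>) :: bit)"
    by (simp only: fps_mod2_nth floor_of_int)
  then show "fps_mod2 (f * g) $ n = (fps_mod2 f * fps_mod2 g) $ n"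
    by (simp only: of_int_sum of_int_mult fps_mod2_nth fps_mult_nth)
qed

lemma fps_mod2_prod:
  "(\<And>j. j \<in> S \<Longrightarrow> int_coeffs (f j)) \<Longrightarrow> fps_mod2 (\<Prod>j\<in>S. f j) = (\<Prod>j\<in>S. fps_mod2 (f j))"
  by (induct S rule: infinite_finite_induct) (simp_all add: fps_mod2_mult int_coeffs_prod)

lemma fps_mod2_power: "int_coeffs f \<Longrightarrow> fps_mod2 (f ^ n) = fps_mod2 f ^ n"
  by (induct n) (simp_all add: fps_mod2_mult int_coeffs_power)

lemma fps_mod2_inverse:
  assumes "int_coeffs f" "f $ 0 = 1"
  shows "fps_mod2 (inverse f) = inverse (fps_mod2 f)"
proof -
  have "fps_mod2 f * fps_mod2 (inverse f) = fps_mod2 (f * inverse f)"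
    using assms by (simp add: fps_mod2_mult int_coeffs_inverse)
  also have "\<dots> = 1" using assms(2) by (simp add: inverse_mult_eq_1')
  finally show ?thesis by (rule fps_inverse_unique[symmetric])
qed

section \<open>Euler products modulo 2\<close>

definition euler_partial :: "nat \<Rightarrow> nat \<Rightarrow> bit fps" where
  "euler_partial k K = (\<Prod>j<K. 1 + fps_X ^ (k * (j + 1)))"

definition euler_mod2 :: "nat \<Rightarrow> bit fps" where
  "euler_mod2 k = Abs_fps (\<lambda>N. euler_partial k (N + 1) $ N)"

lemma fps_eq_upto_euler_partial:
  assumes "0 < k" "N < K" "K \<le> K'"
  shows "fps_eq_upto N (euler_partial k K') (euler_partial k K)"
proof -
  have "euler_partial k K' = euler_partial k K * (\<Prod>j\<in>{K..<K'}. 1 + fps_X ^ (k * (j + 1)))"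
    unfolding euler_partial_def using assms(3)
    by (metis lessThan_atLeast0 prod.atLeastLessThan_concat zero_le)
  moreover have "fps_eq_upto N (\<Prod>j\<in>{K..<K'}. 1 + fps_X ^ (k * (j + 1))) (\<Prod>j\<in>{K..<K'}. 1)"
  proof (rule fps_eq_upto_prod, rule fps_eq_upto_one_plus_X_power)
    fix j assume "j \<in> {K..<K'}"
    then have "N < j + 1" using assms by auto
    also have "j + 1 \<le> k * (j + 1)" using assms(1) mult_le_mono1[of 1 k "j + 1"] by simp
    finally show "N < k * (j + 1)" .
  qed
  ultimately show ?thesis
    using fps_eq_upto_mult[OF fps_eq_upto_refl] by fastforce
qed

lemma fps_eq_upto_euler_mod2:
  assumes "0 < k" "N < K"
  shows "fps_eq_upto N (euler_mod2 k) (euler_partial k K)"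
  unfolding fps_eq_upto_def
proof (intro allI impI)
  fix i assume "i \<le> N"
  then have "fps_eq_upto i (euler_partial k K) (euler_partial k (i + 1))"
    using assms by (intro fps_eq_upto_euler_partial) auto
  then show "euler_mod2 k $ i = euler_partial k K $ i"
    by (simp add: euler_mod2_def fps_eq_upto_def)
qed

lemma euler_mod2_nth_0: "0 < k \<Longrightarrow> euler_mod2 k $ 0 = 1"
  by (simp add: euler_mod2_def euler_partial_def)

lemma euler_partial_double: "euler_partial (2 * k) K = euler_partial k K ^ 2"
  unfolding euler_partial_def prod_power_distrib
  by (intro prod.cong) (auto simp: bit_fps_power2_add ac_simps simp flip: power_mult)

lemma euler_mod2_double:
  assumes "0 < k"
  shows "euler_mod2 (2 * k) = euler_mod2 k ^ 2"
proof (rule fps_eq_upto_imp_eq)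
  fix d
  have "fps_eq_upto d (euler_mod2 (2 * k)) (euler_partial (2 * k) (d + 1))"
    using assms by (intro fps_eq_upto_euler_mod2) auto
  also have "euler_partial (2 * k) (d + 1) = euler_partial k (d + 1) * euler_partial k (d + 1)"
    by (simp add: euler_partial_double power2_eq_square)
  also have "fps_eq_upto d \<dots> (euler_mod2 k * euler_mod2 k)"
    using assms by (intro fps_eq_upto_mult fps_eq_upto_sym[OF fps_eq_upto_euler_mod2]) auto
  finally show "fps_eq_upto d (euler_mod2 (2 * k)) (euler_mod2 k ^ 2)"
    by (simp add: power2_eq_square)
qed

lemma euler_mod2_times4: "0 < k \<Longrightarrow> euler_mod2 (4 * k) = euler_mod2 k ^ 4"
  using euler_mod2_double[of k] euler_mod2_double[of "2 * k"]
  by (simp flip: power_mult)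

lemma fps_mod2_qpoch: "fps_mod2 (qpoch a) = euler_mod2 a"
proof (rule fps_ext)
  fix N
  have "fps_mod2 (qpoch a) $ N = fps_mod2 (\<Prod>j<N+1. 1 - fps_X ^ (a * (j + 1)) :: rat fps) $ N"
    by (simp add: fps_mod2_nth qpoch_def)
  also have "fps_mod2 (\<Prod>j<N+1. 1 - fps_X ^ (a * (j + 1)) :: rat fps) = euler_partial a (N + 1)"
    unfolding euler_partial_def
    by (subst fps_mod2_prod) (auto intro!: int_coeffs_diff simp: fps_mod2_one_minus_X_power)
  finally show "fps_mod2 (qpoch a) $ N = euler_mod2 a $ N"
    by (simp add: euler_mod2_def)
qed

lemma int_coeffs_qpoch: "int_coeffs (qpoch a)"
proof -
  have "int_coeffs (\<Prod>j<N+1. 1 - fps_X ^ (a * (j + 1)) :: rat fps)" for N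
    by (intro int_coeffs_prod int_coeffs_diff) auto
  then show ?thesis
    unfolding int_coeffs_def qpoch_def by simp
qed

lemma qpoch_nth_0: "0 < a \<Longrightarrow> qpoch a $ 0 = 1"
  by (simp add: qpoch_def)

section \<open>Gaussian binomial coefficients\<close>

fun qbinom :: "'a::comm_semiring_1 \<Rightarrow> nat \<Rightarrow> nat \<Rightarrow> 'a" where
  "qbinom Q 0 i = (if i = 0 then 1 else 0)"
| "qbinom Q (Suc N) i = (if i = 0 then 1 else qbinom Q N i + Q ^ (Suc N - i) * qbinom Q N (i - 1))"

lemma qbinom_eq_0: "N < i \<Longrightarrow> qbinom Q N i = 0"
  by (induct N arbitrary: i) auto

lemma qbinom_0_right [simp]: "qbinom Q N 0 = 1"
  by (cases N) auto

lemma qbinom_Suc_eq: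
  "qbinom Q (Suc N) i = qbinom Q N i + (if i = 0 then 0 else Q ^ (Suc N - i) * qbinom Q N (i - 1))"
  by simp

fun triangle :: "nat \<Rightarrow> nat" where
  "triangle 0 = 0"
| "triangle (Suc i) = triangle i + Suc i"

lemma two_times_triangle: "2 * triangle i = i * (i + 1)"
  by (induct i) auto

lemma q_binomial_theorem:
  fixes y Q :: "'a::comm_semiring_1"
  shows "(\<Prod>i<N. y + Q ^ (i + 1)) = (\<Sum>i\<le>N. qbinom Q N i * Q ^ triangle i * y ^ (N - i))"
proof (induct N)
  case (Suc N)
  define h where "h i = qbinom Q N i * Q ^ triangle i * y ^ (N - i)" for i
  have sum_unshifted: "(\<Sum>i\<le>Suc N. qbinom Q N i * Q ^ triangle i * y ^ (Suc N - i)) = y * (\<Sum>i\<le>N. h i)"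
  proof -
    have "y * (\<Sum>i\<le>N. h i) = (\<Sum>i\<le>N. qbinom Q N i * Q ^ triangle i * y ^ (Suc N - i))"
      unfolding sum_distrib_left h_def by (intro sum.cong refl) (auto simp: Suc_diff_le algebra_simps)
    then show ?thesis by (simp add: qbinom_eq_0)
  qed
  have sum_shifted: "(\<Sum>i\<le>Suc N. (if i = 0 then 0 else Q ^ (Suc N - i) * qbinom Q N (i - 1))
                 * Q ^ triangle i * y ^ (Suc N - i)) = Q ^ Suc N * (\<Sum>i\<le>N. h i)"
  proof -
    have "Q ^ (Suc N - Suc l) * qbinom Q N l * Q ^ triangle (Suc l) * y ^ (Suc N - Suc l)
        = Q ^ Suc N * h l" if "l \<le> N" for l
    proof -
      have "Q ^ (N - l) * Q ^ triangle (Suc l) = Q ^ (N - l + triangle (Suc l))"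
        by (rule power_add[symmetric])
      also have "N - l + triangle (Suc l) = Suc N + triangle l" using that by simp
      finally have "Q ^ (N - l) * Q ^ triangle (Suc l) = Q ^ Suc N * Q ^ triangle l"
        by (simp only: power_add)
      then show ?thesis
        unfolding h_def diff_Suc_Suc by (simp only: ac_simps)
    qed
    then have "(\<Sum>l\<le>N. Q ^ (Suc N - Suc l) * qbinom Q N l * Q ^ triangle (Suc l) * y ^ (Suc N - Suc l))
        = (\<Sum>l\<le>N. Q ^ Suc N * h l)"
      by (intro sum.cong) auto
    then show ?thesis
      unfolding sum.atMost_Suc_shift sum_distrib_left by simp
  qed
  have "(\<Prod>i<Suc N. y + Q ^ (i + 1)) = (\<Sum>i\<le>N. h i) * (y + Q ^ Suc N)"
    using Suc by (simp add: h_def)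
  also have "\<dots> = y * (\<Sum>i\<le>N. h i) + Q ^ Suc N * (\<Sum>i\<le>N. h i)"
    by (simp only: distrib_left mult.commute[of "\<Sum>i\<le>N. h i"])
  also have "\<dots> = (\<Sum>i\<le>Suc N. qbinom Q (Suc N) i * Q ^ triangle i * y ^ (Suc N - i))"
    unfolding qbinom_Suc_eq distrib_right sum.distrib sum_unshifted sum_shifted ..
  finally show ?case .
qed simp

definition q_pochhammer :: "'a::comm_ring_1 \<Rightarrow> nat \<Rightarrow> 'a" where
  "q_pochhammer Q m = (\<Prod>l<m. 1 - Q ^ (l + 1))"

lemma q_pochhammer_Suc: "q_pochhammer Q (Suc m) = q_pochhammer Q m * (1 - Q ^ Suc m)"
  by (simp add: q_pochhammer_def)

lemma qbinom_mult_q_pochhammer: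
  "i \<le> N \<Longrightarrow> qbinom Q N i * q_pochhammer Q i * q_pochhammer Q (N - i) = q_pochhammer Q N"
proof (induct N arbitrary: i)
  case (Suc N)
  show ?case
  proof (cases i)
    case (Suc l)
    with Suc.prems have l: "l \<le> N" by simp
    let ?P = "q_pochhammer Q"
    have binom_term: "qbinom Q N (Suc l) * ?P (Suc l) * ?P (N - l) = ?P N * (1 - Q ^ (N - l))"
    proof (cases "l = N")
      case False
      then have "N - l = Suc (N - Suc l)" using l by simp
      then have "?P (N - l) = ?P (N - Suc l) * (1 - Q ^ (N - l))"
        by (simp only: q_pochhammer_Suc)
      then have "qbinom Q N (Suc l) * ?P (Suc l) * ?P (N - l)
          = (qbinom Q N (Suc l) * ?P (Suc l) * ?P (N - Suc l)) * (1 - Q ^ (N - l))"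
        by (simp only: mult.assoc)
      then show ?thesis
        using Suc.hyps[of "Suc l"] l False by simp
    qed (simp add: qbinom_eq_0)
    have shifted_term: "Q ^ (N - l) * qbinom Q N l * ?P (Suc l) * ?P (N - l) = ?P N * (Q ^ (N - l) - Q ^ Suc N)"
    proof -
      have "Q ^ (N - l) * Q ^ Suc l = Q ^ (N - l + Suc l)" by (rule power_add[symmetric])
      also have "N - l + Suc l = Suc N" using l by simp
      finally have pow: "Q ^ (N - l) * Q ^ Suc l = Q ^ Suc N" .
      have "Q ^ (N - l) * qbinom Q N l * ?P (Suc l) * ?P (N - l)
          = (Q ^ (N - l) - Q ^ (N - l) * Q ^ Suc l) * (qbinom Q N l * ?P l * ?P (N - l))"
        by (simp only: q_pochhammer_Suc) (simp add: algebra_simps)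
      also have "\<dots> = (Q ^ (N - l) - Q ^ Suc N) * ?P N"
        by (simp only: pow Suc.hyps[OF l])
      finally show ?thesis by (simp only: mult.commute)
    qed
    have "qbinom Q (Suc N) i * ?P i * ?P (Suc N - i)
        = qbinom Q N (Suc l) * ?P (Suc l) * ?P (N - l)
          + Q ^ (N - l) * qbinom Q N l * ?P (Suc l) * ?P (N - l)"
      using Suc by (simp add: distrib_right)
    also have "\<dots> = ?P N * (1 - Q ^ (N - l)) + ?P N * (Q ^ (N - l) - Q ^ Suc N)"
      by (simp only: binom_term shifted_term)
    also have "\<dots> = ?P (Suc N)"
      by (simp add: q_pochhammer_Suc algebra_simps)
    finally show ?thesis .
  qed (simp add: q_pochhammer_def)
qed (simp add: q_pochhammer_def)

section \<open>Jacobi's identity for the cube of the Euler product, modulo 2\<close>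

text \<open>As \<open>j\<close> runs through \<open>\<int>\<close>, \<open>trinum j = j (2 j - 1)\<close> runs through the triangular numbers,
  each exactly once.\<close>

definition trinum :: "int \<Rightarrow> nat" where
  "trinum j = nat (2 * j ^ 2 - j)"

definition triangular :: "nat \<Rightarrow> bool" where
  "triangular t \<longleftrightarrow> (\<exists>j. t = trinum j)"

definition psi_mod2 :: "nat \<Rightarrow> bit fps" where
  "psi_mod2 k = Abs_fps (\<lambda>m. of_bool (k dvd m \<and> triangular (m div k)))"

lemma psi_mod2_nth: "psi_mod2 k $ m = of_bool (k dvd m \<and> triangular (m div k))"
  by (simp add: psi_mod2_def)

lemma of_nat_trinum: "int (trinum j) = 2 * j ^ 2 - j"
proof -
  have "0 \<le> j * (2 * j - 1)"
    by (cases "0 < j") (simp_all add: mult_nonpos_nonpos)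
  then show ?thesis
    unfolding trinum_def by (simp add: algebra_simps power2_eq_square)
qed

lemma abs_le_trinum: "\<bar>j\<bar> \<le> int (trinum j)"
proof (cases "0 < j")
  case True
  then have "j * 1 \<le> j * j" by (intro mult_left_mono) auto
  then show ?thesis using True by (simp add: of_nat_trinum power2_eq_square)
qed (simp add: of_nat_trinum)

lemma trinum_inj: "trinum a = trinum b \<Longrightarrow> a = b"
proof -
  assume "trinum a = trinum b"
  then have "(a - b) * (2 * a + 2 * b - 1) = 0"
    using of_nat_trinum[of a] of_nat_trinum[of b] by (simp add: algebra_simps power2_eq_square)
  moreover have "2 * a + 2 * b - 1 \<noteq> 0" by presburger
  ultimately show "a = b" by simp
qed

lemma triangular_trinum: "triangular (trinum j)"
  by (auto simp: triangular_def)

lemma triangularI: "int t = 2 * j ^ 2 - j \<Longrightarrow> triangular t"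
  unfolding triangular_def trinum_def by (intro exI[of _ j]) simp

lemma psi_mod2_nth_0 [simp]: "psi_mod2 k $ 0 = 1"
  using triangular_trinum[of 0] by (simp add: psi_mod2_nth trinum_def)

lemma triangular_iff_square: "triangular t \<longleftrightarrow> (\<exists>x::int. x ^ 2 = 8 * int t + 1)"
proof
  assume "triangular t"
  then obtain j where "t = trinum j" by (auto simp: triangular_def)
  then have "(4 * j - 1) ^ 2 = 8 * int t + 1"
    by (simp add: of_nat_trinum algebra_simps power2_eq_square)
  then show "\<exists>x::int. x ^ 2 = 8 * int t + 1" ..
next
  assume "\<exists>x::int. x ^ 2 = 8 * int t + 1"
  then obtain x :: int where x: "x ^ 2 = 8 * int t + 1" ..
  then have "odd (x ^ 2)" by simp
  then have "\<exists>a. x = 4 * a + 1 \<or> x = 4 * a - 1" by simp presburger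
  then obtain a where "x = 4 * a + 1 \<or> x = 4 * a - 1" by blast
  then show "triangular t"
  proof
    assume "x = 4 * a + 1"
    with x have "(4 * a + 1) ^ 2 = 8 * int t + 1" by simp
    then have "8 * int t = 8 * (2 * (- a) ^ 2 - (- a))"
      by (simp add: algebra_simps power2_eq_square)
    then show ?thesis using triangularI[of t "- a"] by simp
  next
    assume "x = 4 * a - 1"
    with x have "(4 * a - 1) ^ 2 = 8 * int t + 1" by simp
    then have "8 * int t = 8 * (2 * a ^ 2 - a)"
      by (simp add: algebra_simps power2_eq_square)
    then show ?thesis using triangularI[of t a] by simp
  qed
qed

lemma sum_X_power_trinum_nth:
  assumes "0 < k" "m \<le> n"
  shows "(\<Sum>i\<le>2*n. (fps_X::bit fps) ^ (k * trinum (int i - int n))) $ m = psi_mod2 k $ m"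
proof -
  let ?S = "{i\<in>{..2*n}. m = k * trinum (int i - int n)}"
  have "(\<Sum>i\<le>2*n. (fps_X::bit fps) ^ (k * trinum (int i - int n))) $ m
      = (\<Sum>i\<le>2*n. if m = k * trinum (int i - int n) then 1 else 0)"
    by (simp add: fps_sum_nth)
  also have "\<dots> = (\<Sum>i\<in>?S. 1)"
    by (rule sum.inter_filter[symmetric]) simp
  also have "\<dots> = psi_mod2 k $ m"
  proof (cases "k dvd m \<and> triangular (m div k)")
    case True
    then obtain j where j: "m div k = trinum j" by (auto simp: triangular_def)
    have "\<bar>j\<bar> \<le> int n"
      using abs_le_trinum[of j] j assms(2) div_le_dividend[of m k] by linarith
    moreover have "m = k * trinum (int i - int n) \<longleftrightarrow> int i - int n = j" for i
      using True j trinum_inj assms(1) by auto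
    ultimately have "i \<in> ?S \<longleftrightarrow> i = nat (int n + j)" for i
      by (simp only: mem_Collect_eq atMost_iff) arith
    then have "?S = {nat (int n + j)}" by blast
    then show ?thesis
      using True by (simp add: psi_mod2_nth)
  next
    case False
    then have "?S = {}"
      using assms(1) triangular_trinum by auto
    then show ?thesis
      using False by (simp only: sum.empty) (simp add: psi_mod2_nth)
  qed
  finally show ?thesis .
qed

definition euler_odd_partial :: "nat \<Rightarrow> nat \<Rightarrow> bit fps" where
  "euler_odd_partial k M = (\<Prod>m<M. 1 + fps_X ^ (k * (2 * m + 1)))"

lemma prod_lessThan_double:
  "(\<Prod>j<2 * M. f j) = (\<Prod>m<M. f (2 * m)) * (\<Prod>m<M. f (2 * m + 1) :: 'a::comm_monoid_mult)" for M :: nat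
  by (induct M) (simp_all add: ac_simps)

lemma prod_lessThan_add:
  "(\<Prod>i<n + m. f i) = (\<Prod>i<n. f i) * (\<Prod>i<m. f (n + i) :: 'a::comm_monoid_mult)" for n m :: nat
  by (induct m) (simp_all add: ac_simps)

lemma euler_partial_even_odd:
  "euler_partial k (2 * M) = euler_odd_partial k M * euler_partial (2 * k) M"
  unfolding euler_partial_def euler_odd_partial_def prod_lessThan_double
  by (simp add: algebra_simps)

lemma q_pochhammer_X_power: "q_pochhammer (fps_X ^ k) m = euler_partial k m"
  unfolding q_pochhammer_def euler_partial_def bit_fps_minus_eq_add
  by (simp add: power_add flip: power_mult)

lemma fps_eq_upto_qbinom_euler:
  assumes "0 < k" "d < i" "d < N - i" "i \<le> N"
  shows "fps_eq_upto d (qbinom (fps_X ^ k) N i * euler_mod2 k) 1"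
proof (rule fps_eq_upto_mult_cancel)
  let ?E = "euler_mod2 k"
  have "fps_eq_upto d (qbinom (fps_X ^ k) N i * ?E * ?E)
      (qbinom (fps_X ^ k) N i * euler_partial k i * euler_partial k (N - i))"
    using assms by (intro fps_eq_upto_mult fps_eq_upto_euler_mod2) simp_all
  also have "qbinom (fps_X ^ k) N i * euler_partial k i * euler_partial k (N - i) = euler_partial k N"
    using qbinom_mult_q_pochhammer[OF assms(4), of "fps_X ^ k :: bit fps"] by (simp add: q_pochhammer_X_power)
  also have "fps_eq_upto d \<dots> (1 * ?E)"
    using assms by (simp add: fps_eq_upto_sym fps_eq_upto_euler_mod2)
  finally show "fps_eq_upto d (qbinom (fps_X ^ k) N i * ?E * ?E) (1 * ?E)" .
  show "?E $ 0 \<noteq> 0"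
    using assms(1) by (simp add: euler_mod2_nth_0)
qed

lemma triangle_exponent:
  assumes "i \<le> 2 * n"
  shows "4 * triangle i + (4 * n + 3) * (2 * n - i) = 6 * n ^ 2 + 5 * n + trinum (int i - int n)"
proof -
  have "2 * int (triangle i) = int i * (int i + 1)"
    using arg_cong[OF two_times_triangle[of i], of int] by (simp add: algebra_simps)
  moreover have "int (4 * triangle i + (4 * n + 3) * (2 * n - i))
      = 2 * (2 * int (triangle i)) + (4 * int n + 3) * (2 * int n - int i)"
    using assms by (simp add: of_nat_diff)
  ultimately have "int (4 * triangle i + (4 * n + 3) * (2 * n - i))
      = 2 * (int i * (int i + 1)) + (4 * int n + 3) * (2 * int n - int i)"
    by simp
  also have "\<dots> = int (6 * n ^ 2 + 5 * n + trinum (int i - int n))"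
    by (simp add: of_nat_trinum algebra_simps power2_eq_square)
  finally show ?thesis by (simp only: of_nat_eq_iff)
qed

lemma prod_power_Suc_eq_power_triangle: "(\<Prod>i<n. Q ^ (i + 1)) = (Q::'a::comm_monoid_mult) ^ triangle n"
  by (induct n) (simp_all add: power_add ac_simps)

lemma X_power_add_shift_low:
  assumes "i < n"
  shows "fps_X ^ (k * (4*n + 3)) + (fps_X ^ (4*k)) ^ (i + 1)
    = (fps_X ^ (4*k)) ^ (i + 1) * (1 + fps_X ^ (k * (4 * (n - Suc i) + 3)) :: 'a::comm_semiring_1 fps)"
proof -
  obtain r where "n = Suc (i + r)"
    using less_imp_Suc_add[OF assms] by blast
  then have "k * (4*n + 3) = 4*k*(i + 1) + k * (4 * (n - Suc i) + 3)"
    by (simp add: algebra_simps)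
  then have "fps_X ^ (k * (4*n + 3)) = fps_X ^ (4*k*(i + 1)) * (fps_X ^ (k * (4 * (n - Suc i) + 3)) :: 'a fps)"
    by (simp only: power_add)
  moreover have "fps_X ^ (4*k*(i + 1)) = ((fps_X ^ (4*k)) ^ (i + 1) :: 'a fps)"
    by (rule power_mult)
  ultimately show ?thesis
    by (simp only: distrib_left mult_1_right add.commute)
qed

lemma X_power_add_shift_high:
  "fps_X ^ (k * (4*n + 3)) + (fps_X ^ (4*k)) ^ (n + i + 1)
    = fps_X ^ (k * (4*n + 3)) * (1 + fps_X ^ (k * (4*i + 1)) :: 'a::comm_semiring_1 fps)"
proof -
  have "4*k*(n + i + 1) = k * (4*n + 3) + k * (4*i + 1)"
    by (simp add: algebra_simps)
  then have "fps_X ^ (4*k*(n + i + 1)) = fps_X ^ (k * (4*n + 3)) * (fps_X ^ (k * (4*i + 1)) :: 'a fps)"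
    by (simp only: power_add)
  moreover have "fps_X ^ (4*k*(n + i + 1)) = ((fps_X ^ (4*k)) ^ (n + i + 1) :: 'a fps)"
    by (rule power_mult)
  ultimately show ?thesis
    by (simp only: distrib_left mult_1_right add.assoc)
qed

lemma euler_odd_partial_shift:
  "(\<Prod>i<2*n. fps_X ^ (k * (4*n + 3)) + (fps_X ^ (4*k)) ^ (i + 1))
     = fps_X ^ (k * (6*n^2 + 5*n)) * euler_odd_partial k (2*n)"
proof -
  let ?Q = "(fps_X::bit fps) ^ (4*k)" and ?y = "(fps_X::bit fps) ^ (k * (4*n + 3))"
  let ?f = "\<lambda>i. ?y + ?Q ^ (i + 1)"
  have "(\<Prod>i<2*n. ?f i) = (\<Prod>i<n. ?f i) * (\<Prod>i<n. ?f (n + i))"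
    by (simp only: mult_2 prod_lessThan_add)
  also have "(\<Prod>i<n. ?f i) = (\<Prod>i<n. ?Q ^ (i + 1) * (1 + fps_X ^ (k * (4 * (n - Suc i) + 3))))"
    by (intro prod.cong refl X_power_add_shift_low) simp
  also have "\<dots> = ?Q ^ triangle n * (\<Prod>i<n. 1 + fps_X ^ (k * (4*i + 3)))"
    by (simp only: prod.distrib prod_power_Suc_eq_power_triangle
        prod.nat_diff_reindex[of "\<lambda>j. 1 + fps_X ^ (k * (4*j + 3))"])
  also have "(\<Prod>i<n. ?f (n + i)) = ?y ^ n * (\<Prod>i<n. 1 + fps_X ^ (k * (4*i + 1)))"
    by (simp only: X_power_add_shift_high add.assoc[symmetric] prod.distrib prod_constant card_lessThan)
  also have "?Q ^ triangle n * ?y ^ n = fps_X ^ (k * (6*n^2 + 5*n))"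
  proof -
    have "4 * triangle n = 2 * (n * (n + 1))"
      using two_times_triangle[of n] by simp
    then have "4 * k * triangle n + k * (4*n + 3) * n = k * (6*n^2 + 5*n)"
      by (simp add: algebra_simps power2_eq_square)
    then show ?thesis
      by (simp flip: power_mult power_add)
  qed
  moreover have "euler_odd_partial k (2*n)
      = (\<Prod>i<n. 1 + fps_X ^ (k * (4*i + 1))) * (\<Prod>i<n. 1 + fps_X ^ (k * (4*i + 3)))"
    unfolding euler_odd_partial_def prod_lessThan_double by (simp add: algebra_simps)
  ultimately show ?thesis
    by (simp add: ac_simps)
qed

lemma euler_odd_partial_eq_sum:
  "euler_odd_partial k (2*n)
     = (\<Sum>i\<le>2*n. qbinom (fps_X ^ (4*k)) (2*n) i * fps_X ^ (k * trinum (int i - int n)))"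
proof -
  let ?Q = "(fps_X::bit fps) ^ (4*k)" and ?y = "(fps_X::bit fps) ^ (k * (4*n + 3))"
  let ?e = "k * (6*n^2 + 5*n)"
  have exp: "?Q ^ triangle i * ?y ^ (2*n - i) = fps_X ^ ?e * fps_X ^ (k * trinum (int i - int n))"
    if "i \<le> 2*n" for i
  proof -
    have "?Q ^ triangle i * ?y ^ (2*n - i) = fps_X ^ (k * (4 * triangle i + (4*n + 3) * (2*n - i)))"
      by (simp add: algebra_simps flip: power_mult power_add)
    then show ?thesis
      by (simp add: triangle_exponent[OF that] distrib_left power_add)
  qed
  have "fps_X ^ ?e * euler_odd_partial k (2*n)
      = (\<Sum>i\<le>2*n. qbinom ?Q (2*n) i * ?Q ^ triangle i * ?y ^ (2*n - i))"
    by (simp only: euler_odd_partial_shift[symmetric] q_binomial_theorem)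
  also have "\<dots> = fps_X ^ ?e * (\<Sum>i\<le>2*n. qbinom ?Q (2*n) i * fps_X ^ (k * trinum (int i - int n)))"
    unfolding sum_distrib_left by (intro sum.cong refl) (simp add: exp mult.assoc mult.left_commute)
  finally show ?thesis by simp
qed

lemma fps_eq_upto_odd_partial_psi:
  assumes "0 < k" "2 * d + 2 \<le> n"
  shows "fps_eq_upto d (euler_odd_partial k (2*n) * euler_mod2 (4*k)) (psi_mod2 k)"
proof -
  let ?E = "euler_mod2 (4*k)" and ?b = "qbinom ((fps_X::bit fps) ^ (4*k)) (2*n)"
  let ?t = "\<lambda>i. trinum (int i - int n)"
  have "euler_odd_partial k (2*n) * ?E = (\<Sum>i\<le>2*n. (?b i * ?E) * fps_X ^ (k * ?t i))"
    unfolding euler_odd_partial_eq_sum sum_distrib_right by (intro sum.cong refl) (simp add: ac_simps)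
  also have "fps_eq_upto d \<dots> (\<Sum>i\<le>2*n. fps_X ^ (k * ?t i))"
  proof (rule fps_eq_upto_sum)
    fix i assume i: "i \<in> {..2*n}"
    show "fps_eq_upto d ((?b i * ?E) * fps_X ^ (k * ?t i)) (fps_X ^ (k * ?t i))"
    proof (cases "d < k * ?t i")
      case True
      have "fps_eq_upto d (fps_X ^ (k * ?t i) * (?b i * ?E)) (fps_X ^ (k * ?t i) * 1)"
        using fps_eq_upto_trans[OF fps_eq_upto_X_power_mult fps_eq_upto_sym[OF fps_eq_upto_X_power_mult]]
          True by blast
      then show ?thesis
        by (simp add: mult.commute)
    next
      case False
      moreover have "?t i \<le> k * ?t i"
        using assms(1) by (cases k) auto
      ultimately have "?t i \<le> d"
        by linarith
      then have "\<bar>int i - int n\<bar> \<le> int d"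
        using abs_le_trinum[of "int i - int n"] by linarith
      then have "fps_eq_upto d (?b i * ?E) 1"
        using assms i by (intro fps_eq_upto_qbinom_euler) auto
      then show ?thesis
        using fps_eq_upto_mult[OF _ fps_eq_upto_refl] by fastforce
    qed
  qed
  also have "fps_eq_upto d \<dots> (psi_mod2 k)"
    unfolding fps_eq_upto_def using assms sum_X_power_trinum_nth by auto
  finally show ?thesis .
qed

text \<open>Finite form of the triple product argument: \<open>E_k\<close> agrees with \<open>L E_(2k)\<close> for the product \<open>L\<close>
  of the odd-index factors, so \<open>E_k^3 = L E_(4k)\<close>; expanding \<open>L\<close> by the \<open>q\<close>-binomial theorem, each
  Gaussian coefficient times \<open>E_(4k)\<close> is \<open>1\<close> in low degrees, which leaves \<open>\<psi>(q^k)\<close>.\<close>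

theorem euler_mod2_cube:
  assumes "0 < k"
  shows "euler_mod2 k ^ 3 = psi_mod2 k"
proof (rule fps_eq_upto_imp_eq)
  fix d :: nat
  define n where "n = 2 * d + 2"
  let ?E = "euler_mod2" and ?L = "euler_odd_partial k (2*n)"
  have "fps_eq_upto d (?E k) (euler_partial k (2 * (2*n)))"
    using assms by (intro fps_eq_upto_euler_mod2) (simp_all add: n_def)
  also have "euler_partial k (2 * (2*n)) = ?L * euler_partial (2*k) (2*n)"
    by (rule euler_partial_even_odd)
  also have "fps_eq_upto d \<dots> (?L * ?E (2*k))"
    using assms by (intro fps_eq_upto_mult fps_eq_upto_sym[OF fps_eq_upto_euler_mod2]) (simp_all add: n_def)
  finally have "fps_eq_upto d (?E k * ?E k ^ 2) (?L * ?E (2*k) * ?E k ^ 2)"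
    by (rule fps_eq_upto_mult) simp
  also have "?L * ?E (2*k) * ?E k ^ 2 = ?L * ?E (4*k)"
    using assms by (simp add: euler_mod2_double euler_mod2_times4 mult.assoc flip: power_add)
  also have "fps_eq_upto d \<dots> (psi_mod2 k)"
    by (rule fps_eq_upto_odd_partial_psi[OF assms]) (simp add: n_def)
  finally show "fps_eq_upto d (?E k ^ 3) (psi_mod2 k)"
    by (simp add: power_numeral_reduce)
qed

section \<open>An identity for \<open>\<psi>(q) \<psi>(q\<^sup>3)\<close> modulo 2\<close>

lemma odd_square_eq: "odd (x::int) \<Longrightarrow> \<exists>t. x ^ 2 = 8 * t + 1"
proof -
  assume "odd x"
  then obtain a where a: "x = 2 * a + 1" by (blast elim: oddE)
  have "even (a * (a + 1))" by simp
  then obtain b where "a * (a + 1) = 2 * b" by blast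
  then have "x ^ 2 = 8 * b + 1"
    unfolding a by (simp add: algebra_simps power2_eq_square)
  then show ?thesis ..
qed

definition odd_reps :: "nat \<Rightarrow> (int \<times> int) set" where
  "odd_reps n = {(x, y). 0 < x \<and> 0 < y \<and> odd x \<and> odd y \<and> x ^ 2 + 3 * y ^ 2 = 8 * int n + 4}"

text \<open>With \<open>x + y = 2 u\<close> we have \<open>x\<^sup>2 + 3 y\<^sup>2 = 4 (u\<^sup>2 - u y + y\<^sup>2)\<close>, so rotations of the
  Eisenstein lattice permute the representations; choosing the rotation by the parity of \<open>u\<close>
  keeps both coordinates odd and yields an involution whose fixed points are \<open>x = y\<close> and
  \<open>x = 3 y\<close>.\<close>

definition reps_involution :: "int \<times> int \<Rightarrow> int \<times> int" where
  "reps_involution p = (let u = (fst p + snd p) div 2 in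
     if odd u then (\<bar>u - 2 * snd p\<bar>, u) else (u + snd p, \<bar>u - snd p\<bar>))"

lemma reps_involution_eq:
  "x + y = 2 * u \<Longrightarrow>
    reps_involution (x, y) = (if odd u then (\<bar>u - 2 * y\<bar>, u) else (u + y, \<bar>u - y\<bar>))"
  by (simp add: reps_involution_def Let_def)

lemma finite_odd_reps: "finite (odd_reps n)"
proof (rule finite_subset)
  show "odd_reps n \<subseteq> {1..8 * int n + 4} \<times> {1..8 * int n + 4}"
  proof
    fix p assume "p \<in> odd_reps n"
    then obtain x y where p: "p = (x, y)" "0 < x" "0 < y" "x ^ 2 + 3 * y ^ 2 = 8 * int n + 4"
      unfolding odd_reps_def by auto
    have "x \<le> x ^ 2" "y \<le> y ^ 2"
      using p by (simp_all add: power2_eq_square)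
    with p show "p \<in> {1..8 * int n + 4} \<times> {1..8 * int n + 4}"
      by auto
  qed
qed simp

lemma reps_involution_odd_mid:
  assumes p: "(x, y) \<in> odd_reps n" and u: "x + y = 2 * u" "odd u"
  shows "reps_involution (x, y) \<in> odd_reps n"
    and "reps_involution (reps_involution (x, y)) = (x, y)"
    and "reps_involution (x, y) = (x, y) \<longleftrightarrow> x = y \<or> x = 3 * y"
proof -
  have xy: "0 < x" "0 < y" "odd y" "x ^ 2 + 3 * y ^ 2 = 8 * int n + 4"
    using p by (auto simp: odd_reps_def)
  have x: "x = 2 * u - y" using u by simp
  have s: "reps_involution (x, y) = (\<bar>u - 2 * y\<bar>, u)"
    using reps_involution_eq[OF u(1)] u(2) by simp
  have "odd (u - 2 * y)" using u(2) by simp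
  moreover have "\<bar>u - 2 * y\<bar> ^ 2 + 3 * u ^ 2 = x ^ 2 + 3 * y ^ 2"
    unfolding x by (simp add: algebra_simps power2_eq_square)
  moreover have "0 < u" using u xy by simp
  ultimately show "reps_involution (x, y) \<in> odd_reps n"
    unfolding s odd_reps_def using xy u(2) by (auto simp: odd_pos)
  show "reps_involution (reps_involution (x, y)) = (x, y)"
  proof (cases "2 * y \<le> u")
    case True
    have "\<bar>u - 2 * y\<bar> + u = 2 * (u - y)" using True by simp
    moreover have "even (u - y)" using u(2) xy(3) by simp
    ultimately show ?thesis
      unfolding s using reps_involution_eq[of "\<bar>u - 2 * y\<bar>" u "u - y"] x xy(2) by simp
  next
    case False
    have "\<bar>u - 2 * y\<bar> + u = 2 * y" using False by simp
    then show ?thesis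
      unfolding s using reps_involution_eq[of "\<bar>u - 2 * y\<bar>" u y] x xy(1,3) by simp
  qed
  show "reps_involution (x, y) = (x, y) \<longleftrightarrow> x = y \<or> x = 3 * y"
    using s x u(2) xy(2,3) by auto
qed

lemma reps_involution_even_mid:
  assumes p: "(x, y) \<in> odd_reps n" and u: "x + y = 2 * u" "even u"
  shows "reps_involution (x, y) \<in> odd_reps n"
    and "reps_involution (reps_involution (x, y)) = (x, y)"
    and "reps_involution (x, y) = (x, y) \<longleftrightarrow> x = y \<or> x = 3 * y"
proof -
  have xy: "0 < x" "0 < y" "odd y" "x ^ 2 + 3 * y ^ 2 = 8 * int n + 4"
    using p by (auto simp: odd_reps_def)
  have x: "x = 2 * u - y" using u by simp
  have s: "reps_involution (x, y) = (u + y, \<bar>u - y\<bar>)"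
    using reps_involution_eq[OF u(1)] u(2) by simp
  have "odd (u - y)" "odd (u + y)" using u(2) xy(3) by simp_all
  moreover have "(u + y) ^ 2 + 3 * \<bar>u - y\<bar> ^ 2 = x ^ 2 + 3 * y ^ 2"
    unfolding x by (simp add: algebra_simps power2_eq_square)
  moreover have "0 < u" using u xy by simp
  ultimately show "reps_involution (x, y) \<in> odd_reps n"
    unfolding s odd_reps_def using xy by (auto simp: odd_pos)
  show "reps_involution (reps_involution (x, y)) = (x, y)"
  proof (cases "y \<le> u")
    case True
    have "u + y + \<bar>u - y\<bar> = 2 * u" using True by simp
    then show ?thesis
      unfolding s using reps_involution_eq[of "u + y" "\<bar>u - y\<bar>" u] x xy(2) u(2) True by simp
  next
    case False
    have "u + y + \<bar>u - y\<bar> = 2 * y" using False by simp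
    then show ?thesis
      unfolding s using reps_involution_eq[of "u + y" "\<bar>u - y\<bar>" y] x xy(1,3) False by simp
  qed
  show "reps_involution (x, y) = (x, y) \<longleftrightarrow> x = y \<or> x = 3 * y"
    using s x u(2) xy(2,3) by auto
qed

lemma reps_involution:
  assumes "p \<in> odd_reps n"
  shows "reps_involution p \<in> odd_reps n"
    and "reps_involution (reps_involution p) = p"
    and "reps_involution p = p \<longleftrightarrow> fst p = snd p \<or> fst p = 3 * snd p"
proof -
  obtain x y where p: "p = (x, y)" by fastforce
  have "even (x + y)" using assms p by (simp add: odd_reps_def)
  then obtain u where "x + y = 2 * u" by blast
  then show "reps_involution p \<in> odd_reps n"
    and "reps_involution (reps_involution p) = p"
    and "reps_involution p = p \<longleftrightarrow> fst p = snd p \<or> fst p = 3 * snd p"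
    using reps_involution_odd_mid[of x y n u] reps_involution_even_mid[of x y n u] assms p
    by (cases "odd u"; simp)+
qed

lemma psi_mod2_1_3_nth:
  "(psi_mod2 1 * psi_mod2 3) $ n
     = of_nat (card {i\<in>{0..n}. triangular i \<and> 3 dvd (n - i) \<and> triangular ((n - i) div 3)})"
proof -
  have "(psi_mod2 1 * psi_mod2 3) $ n
      = (\<Sum>i\<in>{0..n}. if triangular i \<and> 3 dvd (n - i) \<and> triangular ((n - i) div 3) then 1 else 0)"
    unfolding fps_mult_nth psi_mod2_nth by (intro sum.cong refl) simp
  also have "\<dots> = of_nat (card {i\<in>{0..n}. triangular i \<and> 3 dvd (n - i) \<and> triangular ((n - i) div 3)})"
    by (simp flip: sum.inter_filter)
  finally show ?thesis .
qed

lemma odd_reps_decomp: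
  assumes "(x, y) \<in> odd_reps n"
  obtains t s where "x ^ 2 = 8 * t + 1" "y ^ 2 = 8 * s + 1" "0 \<le> t" "0 \<le> s" "t + 3 * s = int n"
proof -
  have p: "0 < x" "0 < y" "odd x" "odd y" "x ^ 2 + 3 * y ^ 2 = 8 * int n + 4"
    using assms unfolding odd_reps_def by auto
  obtain t where t: "x ^ 2 = 8 * t + 1" using odd_square_eq[OF p(3)] by blast
  obtain s where s: "y ^ 2 = 8 * s + 1" using odd_square_eq[OF p(4)] by blast
  have "0 < x ^ 2" "0 < y ^ 2" using p by auto
  then have "0 \<le> t" "0 \<le> s" using t s by auto
  moreover have "t + 3 * s = int n" using p(5) t s by simp
  ultimately show ?thesis using that t s by blast
qed

definition reps_index :: "int \<times> int \<Rightarrow> nat" where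
  "reps_index p = nat ((fst p ^ 2 - 1) div 8)"

lemma reps_index_eq: "x ^ 2 = 8 * t + 1 \<Longrightarrow> reps_index (x, y) = nat t"
  by (simp add: reps_index_def)

lemma inj_on_reps_index: "inj_on reps_index (odd_reps n)"
proof (rule inj_onI)
  fix p q assume pq: "p \<in> odd_reps n" "q \<in> odd_reps n" "reps_index p = reps_index q"
  obtain x y x' y' where p: "p = (x, y)" and q: "q = (x', y')" by fastforce
  obtain t s where ts: "x ^ 2 = 8 * t + 1" "y ^ 2 = 8 * s + 1" "0 \<le> t" "t + 3 * s = int n"
    using odd_reps_decomp pq(1) p by metis
  obtain t' s' where ts': "x' ^ 2 = 8 * t' + 1" "y' ^ 2 = 8 * s' + 1" "0 \<le> t'" "t' + 3 * s' = int n"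
    using odd_reps_decomp pq(2) q by metis
  have "t = t'"
    using pq(3) ts ts' by (simp add: p q reps_index_eq)
  then have "x ^ 2 = x' ^ 2" "y ^ 2 = y' ^ 2" using ts ts' by auto
  moreover have "0 < x" "0 < y" "0 < x'" "0 < y'" using pq p q unfolding odd_reps_def by auto
  ultimately show "p = q" using p q by (simp add: power2_eq_iff_nonneg)
qed

lemma reps_index_image:
  "reps_index ` odd_reps n = {i\<in>{0..n}. triangular i \<and> 3 dvd (n - i) \<and> triangular ((n - i) div 3)}"
    (is "_ = ?I")
proof
  show "reps_index ` odd_reps n \<subseteq> ?I"
  proof
    fix i assume "i \<in> reps_index ` odd_reps n"
    then obtain x y where xy: "(x, y) \<in> odd_reps n" "i = reps_index (x, y)" by force
    obtain t s where ts: "x ^ 2 = 8 * t + 1" "y ^ 2 = 8 * s + 1" "0 \<le> t" "0 \<le> s" "t + 3 * s = int n"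
      using odd_reps_decomp xy(1) by blast
    have i: "int i = t" using xy(2) reps_index_eq[OF ts(1)] ts(3) by simp
    then have ni: "int (n - i) = 3 * s" using ts by simp
    then have "3 dvd (n - i)" by presburger
    moreover have "int ((n - i) div 3) = s" using ni by simp
    then have "triangular i" "triangular ((n - i) div 3)"
      using ts i by (auto simp: triangular_iff_square)
    moreover have "i \<le> n" using i ts by simp
    ultimately show "i \<in> ?I" by simp
  qed
next
  show "?I \<subseteq> reps_index ` odd_reps n"
  proof
    fix i assume "i \<in> ?I"
    then have i: "i \<le> n" "triangular i" "3 dvd (n - i)" "triangular ((n - i) div 3)" by auto
    obtain x :: int where x: "x ^ 2 = 8 * int i + 1" using i(2) triangular_iff_square by blast
    obtain y :: int where y: "y ^ 2 = 8 * int ((n - i) div 3) + 1" using i(4) triangular_iff_square by blast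
    have "odd (x ^ 2)" "odd (y ^ 2)" using x y by simp_all
    then have "odd \<bar>x\<bar>" "odd \<bar>y\<bar>" by simp_all
    moreover have "int (n - i) = 3 * int ((n - i) div 3)" using i(3) by auto
    then have "\<bar>x\<bar> ^ 2 + 3 * \<bar>y\<bar> ^ 2 = 8 * int n + 4" using x y i(1) by (simp add: of_nat_diff)
    ultimately have "(\<bar>x\<bar>, \<bar>y\<bar>) \<in> odd_reps n"
      unfolding odd_reps_def by (auto simp: odd_pos)
    moreover have "reps_index (\<bar>x\<bar>, \<bar>y\<bar>) = i" using reps_index_eq[of "\<bar>x\<bar>" "int i"] x by simp
    ultimately show "i \<in> reps_index ` odd_reps n" by force
  qed
qed

lemma card_pos_roots:
  fixes a c :: int
  assumes "0 < a" "c \<noteq> 0"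
  shows "card {z. 0 < z \<and> a * z ^ 2 = c} = of_bool (\<exists>z. a * z ^ 2 = c)"
proof (cases "\<exists>z. a * z ^ 2 = c")
  case True
  then obtain z where z: "a * z ^ 2 = c" ..
  then have "z \<noteq> 0" using assms(2) by auto
  moreover have "w = \<bar>z\<bar>" if "0 < w" "a * w ^ 2 = c" for w
  proof -
    have "a * w ^ 2 = a * z ^ 2" using that(2) z by simp
    then have "w ^ 2 = \<bar>z\<bar> ^ 2" using assms(1) by simp
    then show ?thesis using that(1) power2_eq_iff_nonneg[of w "\<bar>z\<bar>"] by simp
  qed
  ultimately have "{z. 0 < z \<and> a * z ^ 2 = c} = {\<bar>z\<bar>}" using z by auto
  then show ?thesis using True by simp
qed auto

lemma odd_reps_fixed_points:
  "{p\<in>odd_reps n. reps_involution p = p}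
     = (\<lambda>z. (z, z)) ` {z. 0 < z \<and> z ^ 2 = 2 * int n + 1}
       \<union> (\<lambda>z. (3 * z, z)) ` {z. 0 < z \<and> 3 * z ^ 2 = 2 * int n + 1}" (is "_ = ?A \<union> ?B")
proof -
  have "{p\<in>odd_reps n. reps_involution p = p} = {p\<in>odd_reps n. fst p = snd p \<or> fst p = 3 * snd p}"
    using reps_involution by blast
  also have "\<dots> = ?A \<union> ?B"
  proof (intro equalityI subsetI)
    fix p assume "p \<in> {p\<in>odd_reps n. fst p = snd p \<or> fst p = 3 * snd p}"
    then obtain x y where p: "p = (x, y)" "0 < y" "x ^ 2 + 3 * y ^ 2 = 8 * int n + 4"
      and xy: "x = y \<or> x = 3 * y"
      by (auto simp: odd_reps_def)
    from xy show "p \<in> ?A \<union> ?B"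
    proof
      assume "x = y"
      then have "p = (y, y)" "y ^ 2 = 2 * int n + 1" using p by simp_all
      then show ?thesis using p(2) by blast
    next
      assume "x = 3 * y"
      then have "p = (3 * y, y)" "3 * y ^ 2 = 2 * int n + 1" using p by (simp_all add: power_mult_distrib)
      then show ?thesis using p(2) by blast
    qed
  next
    fix p assume "p \<in> ?A \<union> ?B"
    then obtain z where z: "0 < z"
      "p = (z, z) \<and> z ^ 2 = 2 * int n + 1 \<or> p = (3 * z, z) \<and> 3 * z ^ 2 = 2 * int n + 1"
      by auto
    from z(2) have "odd (z ^ 2) \<or> odd (3 * z ^ 2)"
      by (elim disjE conjE) simp_all
    then have "odd z"
      by auto
    with z show "p \<in> {p\<in>odd_reps n. fst p = snd p \<or> fst p = 3 * snd p}"
      by (auto simp: odd_reps_def power_mult_distrib)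
  qed
  finally show ?thesis .
qed

lemma psi_mod2_power4_nth: "(psi_mod2 k ^ 4) $ n = of_bool (4 * k dvd n \<and> triangular (n div (4 * k)))"
proof -
  have "4 dvd n \<and> k dvd n div 4 \<longleftrightarrow> 4 * k dvd n"
    by (auto simp: dvd_div_iff_mult mult.commute dest: dvd_mult_right)
  then show ?thesis
    by (auto simp: bit_fps_power4_nth psi_mod2_nth div_mult2_eq)
qed

lemma square_eq_2n_plus_1_iff: "(\<exists>x::int. x ^ 2 = 2 * int n + 1) \<longleftrightarrow> 4 dvd n \<and> triangular (n div 4)"
proof
  assume "\<exists>x::int. x ^ 2 = 2 * int n + 1"
  then obtain x :: int where x: "x ^ 2 = 2 * int n + 1" ..
  then have "odd (x ^ 2)" by simp
  then obtain t where t: "x ^ 2 = 8 * t + 1" using odd_square_eq by auto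
  then have "int n = 4 * t" using x by simp
  then have "n = 4 * nat t" "x ^ 2 = 8 * int (nat t) + 1" using t by auto
  then show "4 dvd n \<and> triangular (n div 4)" by (auto simp: triangular_iff_square)
next
  assume n: "4 dvd n \<and> triangular (n div 4)"
  then obtain x :: int where "x ^ 2 = 8 * int (n div 4) + 1" by (auto simp: triangular_iff_square)
  moreover have "8 * int (n div 4) = 2 * int n" using n by auto
  ultimately show "\<exists>x::int. x ^ 2 = 2 * int n + 1" by auto
qed

lemma three_square_eq_2n_plus_1_iff:
  "(\<exists>y::int. 3 * y ^ 2 = 2 * int n + 1) \<longleftrightarrow> (\<exists>s. n = 12 * s + 1 \<and> triangular s)"
proof
  assume "\<exists>y::int. 3 * y ^ 2 = 2 * int n + 1"
  then obtain y :: int where y: "3 * y ^ 2 = 2 * int n + 1" ..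
  then have "odd (3 * y ^ 2)" by simp
  then obtain s where s: "y ^ 2 = 8 * s + 1" using odd_square_eq by auto
  moreover have "0 \<le> y ^ 2" by simp
  ultimately have "0 \<le> s" by simp
  then have "n = 12 * nat s + 1" "y ^ 2 = 8 * int (nat s) + 1" using s y by auto
  then show "\<exists>s. n = 12 * s + 1 \<and> triangular s" by (auto simp: triangular_iff_square)
next
  assume "\<exists>s. n = 12 * s + 1 \<and> triangular s"
  then obtain s y where "n = 12 * s + 1" "y ^ 2 = 8 * int s + 1" by (auto simp: triangular_iff_square)
  then have "3 * y ^ 2 = 2 * int n + 1" by simp
  then show "\<exists>y::int. 3 * y ^ 2 = 2 * int n + 1" ..
qed

lemma card_odd_reps_mod2:
  "(of_nat (card (odd_reps n)) :: bit)
     = of_nat (card {z::int. 0 < z \<and> z ^ 2 = 2 * int n + 1})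
       + of_nat (card {z::int. 0 < z \<and> 3 * z ^ 2 = 2 * int n + 1})"
proof -
  let ?A = "{z::int. 0 < z \<and> z ^ 2 = 2 * int n + 1}"
  let ?B = "{z::int. 0 < z \<and> 3 * z ^ 2 = 2 * int n + 1}"
  let ?F = "{p\<in>odd_reps n. reps_involution p = p}"
  have "finite ((\<lambda>z. (z, z)) ` ?A \<union> (\<lambda>z. (3 * z, z)) ` ?B)"
    unfolding odd_reps_fixed_points[symmetric] using finite_odd_reps by simp
  then have fin: "finite ?A" "finite ?B"
    by (auto dest: finite_imageD simp: inj_on_def)
  have "(of_nat (card (odd_reps n)) :: bit) = (\<Sum>p\<in>odd_reps n. 1)"
    by simp
  also have "\<dots> = (\<Sum>p\<in>?F. 1)"
    by (rule sum_bit_fixed_points) (simp_all add: reps_involution finite_odd_reps)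
  also have "\<dots> = of_nat (card ?F)"
    by simp
  also have "card ?F = card ((\<lambda>z. (z, z)) ` ?A) + card ((\<lambda>z. (3 * z, z)) ` ?B)"
    unfolding odd_reps_fixed_points using fin by (intro card_Un_disjoint) auto
  also have "\<dots> = card ?A + card ?B"
    by (simp add: card_image inj_on_def)
  finally show ?thesis
    by simp
qed

theorem psi_mod2_1_3: "psi_mod2 1 * psi_mod2 3 = psi_mod2 1 ^ 4 + fps_X * psi_mod2 3 ^ 4"
proof (rule fps_ext)
  fix n
  have "(psi_mod2 1 * psi_mod2 3) $ n = of_nat (card (reps_index ` odd_reps n))"
    by (simp only: psi_mod2_1_3_nth reps_index_image)
  also have "\<dots> = of_nat (card {z::int. 0 < z \<and> z ^ 2 = 2 * int n + 1})
      + of_nat (card {z::int. 0 < z \<and> 3 * z ^ 2 = 2 * int n + 1})"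
    by (simp add: card_image[OF inj_on_reps_index] card_odd_reps_mod2)
  also have "of_nat (card {z::int. 0 < z \<and> z ^ 2 = 2 * int n + 1}) = (psi_mod2 1 ^ 4) $ n"
    using card_pos_roots[of 1 "2 * int n + 1"]
    by (simp add: psi_mod2_power4_nth square_eq_2n_plus_1_iff)
  also have "of_nat (card {z::int. 0 < z \<and> 3 * z ^ 2 = 2 * int n + 1}) = (fps_X * psi_mod2 3 ^ 4) $ n"
  proof -
    have "(fps_X * psi_mod2 3 ^ 4) $ n = of_bool (\<exists>s. n = 12 * s + 1 \<and> triangular s)"
      by (cases n) (auto simp: psi_mod2_power4_nth)
    then show ?thesis
      using card_pos_roots[of 3 "2 * int n + 1"] by (simp add: three_square_eq_2n_plus_1_iff)
  qed
  finally show "(psi_mod2 1 * psi_mod2 3) $ n = (psi_mod2 1 ^ 4 + fps_X * psi_mod2 3 ^ 4) $ n"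
    by simp
qed

section \<open>The eta quotient modulo 2\<close>

lemma ring_inverse_cube_identity:
  fixes A B A' B' X :: "'a::comm_ring_1"
  assumes "A * A' = 1" "B * B' = 1"
  shows "(A ^ 3 + A ^ 2 * (X * B) + A * (X * B) ^ 2 + (X * B) ^ 3) * (A' * B')
      = A ^ 2 * B' + X * A + X ^ 2 * B + X ^ 3 * B ^ 2 * A'"
proof -
  have "(A ^ 3 + A ^ 2 * (X * B) + A * (X * B) ^ 2 + (X * B) ^ 3) * (A' * B')
      = A ^ 2 * B' * (A * A') + X * A * (A * A') * (B * B') + X ^ 2 * B * (A * A') * (B * B')
        + X ^ 3 * B ^ 2 * A' * (B * B')"
    by (simp add: algebra_simps power2_eq_square power3_eq_cube)
  then show ?thesis
    using assms by simp
qed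

text \<open>If \<open>a b = a\<^sup>4 + q b\<^sup>4\<close>, then \<open>1/(a b) = (a b)\<^sup>3 / (a\<^sup>4 b\<^sup>4)\<close> expands, by the Frobenius
  rule for the cube, into fourth powers plus \<open>q a\<^sup>4 + q\<^sup>2 b\<^sup>4\<close>.\<close>

lemma bit_fps_inverse_mult_eq:
  fixes a b :: "bit fps"
  assumes ab: "a * b = a ^ 4 + fps_X * b ^ 4" and "a $ 0 \<noteq> 0" "b $ 0 \<noteq> 0"
  shows "inverse (a * b) = (a ^ 2 * inverse b) ^ 4 + fps_X * a ^ 4 + fps_X ^ 2 * b ^ 4
           + fps_X ^ 3 * (b ^ 2 * inverse a) ^ 4"
proof -
  let ?A = "a ^ 4" and ?B = "b ^ 4" and ?A' = "inverse a ^ 4" and ?B' = "inverse b ^ 4"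
  have units: "?A * ?A' = 1" "?B * ?B' = 1"
    using assms(2,3) by (simp_all add: inverse_mult_eq_1' flip: power_mult_distrib)
  have "inverse (a * b) = (a * b) ^ 3 * (?A' * ?B')"
  proof (rule fps_inverse_unique)
    have "a * b * ((a * b) ^ 3 * (?A' * ?B')) = (?A * ?A') * (?B * ?B')"
      by (simp add: power_mult_distrib power3_eq_cube power4_eq_xxxx ac_simps)
    then show "a * b * ((a * b) ^ 3 * (?A' * ?B')) = 1"
      using units by simp
  qed
  also have "(a * b) ^ 3 = ?A ^ 3 + ?A ^ 2 * (fps_X * ?B) + ?A * (fps_X * ?B) ^ 2 + (fps_X * ?B) ^ 3"
    unfolding ab by (rule bit_fps_power3_add)
  also have "\<dots> * (?A' * ?B') = ?A ^ 2 * ?B' + fps_X * ?A + fps_X ^ 2 * ?B + fps_X ^ 3 * ?B ^ 2 * ?A'"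
    using units by (rule ring_inverse_cube_identity)
  finally show ?thesis
    by (simp add: power_mult_distrib mult.assoc flip: power_mult)
qed

lemma inverse_psi_mod2_1_3:
  "inverse (psi_mod2 1 * psi_mod2 3) = (psi_mod2 1 ^ 2 * inverse (psi_mod2 3)) ^ 4
     + fps_X * psi_mod2 1 ^ 4 + fps_X ^ 2 * psi_mod2 3 ^ 4 + fps_X ^ 3 * (psi_mod2 3 ^ 2 * inverse (psi_mod2 1)) ^ 4"
  by (rule bit_fps_inverse_mult_eq[OF psi_mod2_1_3]) simp_all

lemma inverse_psi_mod2_1_3_nth:
  "inverse (psi_mod2 1 * psi_mod2 3) $ (4 * t + 1) = psi_mod2 1 $ t"
  "inverse (psi_mod2 1 * psi_mod2 3) $ (4 * t + 2) = psi_mod2 3 $ t"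
  unfolding inverse_psi_mod2_1_3 fps_add_nth
  by (simp_all add: bit_fps_power4_nth fps_X_power_mult_nth)
    (auto simp: bit_fps_power4_nth dest: dvd_diffD1[rotated]; presburger)+

lemma int_coeffs_Pfps: "int_coeffs Pfps"
  and Pfps_nth_0: "Pfps $ 0 = 1"
proof -
  have "int_coeffs (qpoch 2 * qpoch 6)" "(qpoch 2 * qpoch 6) $ 0 = 1"
    by (simp_all add: int_coeffs_mult int_coeffs_qpoch qpoch_nth_0)
  then show "int_coeffs Pfps" "Pfps $ 0 = 1"
    unfolding Pfps_def by (simp_all add: int_coeffs_mult int_coeffs_qpoch int_coeffs_inverse qpoch_nth_0)
qed

lemma fps_mod2_Pfps: "fps_mod2 Pfps = inverse (euler_mod2 1 * euler_mod2 3)"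
proof -
  let ?U = "euler_mod2 1 * euler_mod2 3"
  have "int_coeffs (qpoch 2 * qpoch 6)" "(qpoch 2 * qpoch 6) $ 0 = 1"
    by (simp_all add: int_coeffs_mult int_coeffs_qpoch qpoch_nth_0)
  then have "fps_mod2 Pfps = euler_mod2 1 * euler_mod2 3 * inverse (euler_mod2 2 * euler_mod2 6)"
    unfolding Pfps_def
    by (simp add: fps_mod2_mult fps_mod2_inverse int_coeffs_mult int_coeffs_qpoch int_coeffs_inverse
        fps_mod2_qpoch)
  also have "euler_mod2 2 * euler_mod2 6 = ?U * ?U"
    using euler_mod2_double[of 1] euler_mod2_double[of 3]
    by (simp only: mult_1_right) (simp add: power2_eq_square ac_simps)
  also have "?U * inverse (?U * ?U) = (?U * inverse ?U) * inverse ?U"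
    by (simp only: fps_inverse_mult mult.assoc)
  also have "?U * inverse ?U = 1"
    by (rule inverse_mult_eq_1') (simp add: euler_mod2_nth_0)
  finally show ?thesis by simp
qed

lemma fps_mod2_Pfps_power6: "fps_mod2 (Pfps ^ 6) = inverse (psi_mod2 1 * psi_mod2 3) ^ 2"
proof -
  have "fps_mod2 (Pfps ^ 6) = inverse ((euler_mod2 1 ^ 3 * euler_mod2 3 ^ 3) ^ 2)"
    by (simp add: fps_mod2_power int_coeffs_Pfps fps_mod2_Pfps fps_inverse_power
        flip: power_mult_distrib power_mult)
  then show ?thesis
    by (simp add: euler_mod2_cube fps_inverse_power)
qed

lemma fps_mod2_Pfps_power6_nth:
  "fps_mod2 (Pfps ^ 6) $ (8 * t + 2) = of_bool (triangular t)"
  "fps_mod2 (Pfps ^ 6) $ (24 * t + 4) = of_bool (triangular t)"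
proof -
  have double: "fps_mod2 (Pfps ^ 6) $ (2 * M) = inverse (psi_mod2 1 * psi_mod2 3) $ M" for M
    by (simp add: fps_mod2_Pfps_power6 bit_fps_power2_nth)
  have "8 * t + 2 = 2 * (4 * t + 1)" by simp
  then have "fps_mod2 (Pfps ^ 6) $ (8 * t + 2) = inverse (psi_mod2 1 * psi_mod2 3) $ (4 * t + 1)"
    by (simp only: double)
  also have "\<dots> = of_bool (triangular t)"
    by (subst inverse_psi_mod2_1_3_nth) (simp add: psi_mod2_nth)
  finally show "fps_mod2 (Pfps ^ 6) $ (8 * t + 2) = of_bool (triangular t)" .
  have "24 * t + 4 = 2 * (4 * (3 * t) + 2)" by simp
  then have "fps_mod2 (Pfps ^ 6) $ (24 * t + 4) = inverse (psi_mod2 1 * psi_mod2 3) $ (4 * (3 * t) + 2)"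
    by (simp only: double)
  also have "\<dots> = of_bool (triangular t)"
    by (subst inverse_psi_mod2_1_3_nth) (simp add: psi_mod2_nth)
  finally show "fps_mod2 (Pfps ^ 6) $ (24 * t + 4) = of_bool (triangular t)" .
qed

lemma Jstar6_even_if_coeff_zero:
  assumes "1 \<le> N" "fps_mod2 (Pfps ^ 6) $ nat (N + 1) = 0"
  shows "\<exists>t::int. Jstar6 N = 2 * of_int t"
proof -
  have ints: "int_coeffs (Pfps ^ 6)" "int_coeffs (inverse Pfps ^ 6)"
    by (simp_all add: int_coeffs_power int_coeffs_inverse int_coeffs_Pfps Pfps_nth_0)
  define a where "a = \<lfloor>(Pfps ^ 6) $ nat (N + 1)\<rfloor>"
  define b where "b = \<lfloor>(inverse Pfps ^ 6) $ nat (N - 1)\<rfloor>"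
  have "Jstar6 N = of_int a + 64 * of_int b"
    using assms(1) int_coeffs_nth_eq_floor[OF ints(1)] int_coeffs_nth_eq_floor[OF ints(2)]
    unfolding a_def b_def Jstar6_def by simp
  moreover have "even a"
    using assms(2) even_of_int_iff[of a, where 'a = bit] by (simp add: a_def fps_mod2_nth)
  ultimately have "Jstar6 N = 2 * of_int (a div 2 + 32 * b)"
    by (auto elim!: evenE)
  then show ?thesis ..
qed

lemma Jstar6_even_if_not_square:
  fixes d :: int
  assumes "m \<in> {0, 1}" "\<not> (\<exists>x::int. x ^ 2 = 8 * d + 1)"
  shows "\<exists>t::int. Jstar6 (3 ^ m * (8 * d + 1)) = 2 * of_int t"
proof (cases "d < 0")
  case True
  then have "3 ^ m * (8 * d + 1) < -1"
    using assms(1) by auto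
  then show ?thesis
    by (intro exI[of _ 0]) (simp add: Jstar6_def)
next
  case False
  then have "\<not> triangular (nat d)"
    using assms(2) by (simp add: triangular_iff_square)
  moreover have "fps_mod2 (Pfps ^ 6) $ nat (3 ^ m * (8 * d + 1) + 1) = of_bool (triangular (nat d))"
  proof -
    have "nat (3 ^ m * (8 * d + 1) + 1) \<in> {8 * nat d + 2, 24 * nat d + 4}"
      using False assms(1) by auto
    then show ?thesis
      using fps_mod2_Pfps_power6_nth[of "nat d"] by fastforce
  qed
  ultimately have "fps_mod2 (Pfps ^ 6) $ nat (3 ^ m * (8 * d + 1) + 1) = 0"
    by simp
  moreover have "1 \<le> 3 ^ m * (8 * d + 1)"
    using False assms(1) by auto
  ultimately show ?thesis
    by (intro Jstar6_even_if_coeff_zero)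
qed

section \<open>The arguments are not squares\<close>

lemma odd_square_mult_mod8:
  fixes s q c :: int
  assumes "odd s" "odd q"
  shows "\<exists>d. s ^ 2 * q * (8 * c + q) = 8 * d + 1"
proof -
  obtain a b where s: "s ^ 2 = 8 * a + 1" and q: "q ^ 2 = 8 * b + 1"
    using odd_square_eq assms by blast
  have "q * (8 * c + q) = 8 * (q * c + b) + 1"
    using q by (simp add: algebra_simps power2_eq_square)
  then have "s ^ 2 * q * (8 * c + q) = (8 * a + 1) * (8 * (q * c + b) + 1)"
    using s by (simp add: mult.assoc)
  also have "\<dots> = 8 * ((8 * a + 1) * (q * c + b) + a) + 1"
    by (simp add: algebra_simps)
  finally show ?thesis ..
qed

lemma prime_not_dvd_shift:
  fixes q j c :: int
  assumes "prime q" "odd q" "\<not> q dvd j"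
  shows "\<not> q dvd (8 * q * c + 8 * j + q)"
proof
  assume "q dvd (8 * q * c + 8 * j + q)"
  then have "q dvd (8 * q * c + 8 * j + q) - q * (8 * c + 1)"
    by (intro dvd_diff) simp_all
  moreover have "(8 * q * c + 8 * j + q) - q * (8 * c + 1) = 8 * j"
    by (simp add: algebra_simps)
  ultimately have "q dvd 8 * j"
    by simp
  then have "q dvd 2 ^ 3"
    using assms(1,3) by (simp add: prime_dvd_mult_iff)
  then have "q dvd 2"
    using assms(1) prime_dvd_power by blast
  then have "q = 2"
    using assms(1) zdvd_imp_le[of q 2] prime_ge_2_int[of q] by simp
  then show False
    using assms(2) by simp
qed

lemma prime_mult_not_square:
  fixes q s w x :: int
  assumes "prime q" "\<not> q dvd w" "s \<noteq> 0"
  shows "s ^ 2 * q * w \<noteq> x ^ 2"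
proof
  assume e: "s ^ 2 * q * w = x ^ 2"
  have pe: "prime_elem q" using assms(1) by (rule prime_imp_prime_elem)
  have nz: "w \<noteq> 0" "q \<noteq> 0" using assms(1,2) by auto
  then have "x \<noteq> 0" using e assms(3) by auto
  have "multiplicity q (s ^ 2 * q * w) = 2 * multiplicity q s + 1"
    using pe assms nz
    by (simp add: prime_elem_multiplicity_mult_distrib prime_elem_multiplicity_power_distrib
        not_dvd_imp_multiplicity_0)
  moreover have "multiplicity q (x ^ 2) = 2 * multiplicity q x"
    using pe \<open>x \<noteq> 0\<close> by (simp add: prime_elem_multiplicity_power_distrib)
  ultimately have "2 * multiplicity q s + 1 = 2 * multiplicity q x"
    using e by simp
  then show False
    by presburger
qed

lemma eq_8d_plus_1_non_square:
  fixes s q j c :: int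
  assumes "odd s" "prime q" "odd q" "\<not> q dvd j"
  obtains d where "s ^ 2 * q * (8 * q * c + 8 * j + q) = 8 * d + 1" "\<not> (\<exists>x. x ^ 2 = 8 * d + 1)"
proof -
  let ?w = "8 * q * c + 8 * j + q"
  have w: "8 * (q * c + j) + q = ?w"
    by (simp add: algebra_simps)
  obtain d where d: "s ^ 2 * q * ?w = 8 * d + 1"
    using odd_square_mult_mod8[OF assms(1,3), of "q * c + j"] unfolding w by blast
  have "s \<noteq> 0"
    using assms(1) by auto
  then have "s ^ 2 * q * ?w \<noteq> x ^ 2" for x
    using prime_mult_not_square[OF assms(2) prime_not_dvd_shift[OF assms(2-4)]] by blast
  with d show ?thesis
    using that by (metis (no_types))
qed

theorem theorem1p2:
  fixes k n m :: nat and p :: "nat \<Rightarrow> nat" and j :: int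
  assumes "m \<in> {0, 1}"
    and "\<And>i. i \<le> k \<Longrightarrow> prime (p i)"
    and "\<And>i. i \<le> k \<Longrightarrow> p i mod 8 \<in> {3, 5, 7}"
    and "\<not> int (p k) dvd j"
  shows "\<exists>t::int. Jstar6 (3 ^ m * (\<Prod>i<k. int (p i) ^ 2) * int (p k)
            * (8 * int (p k) * int n + 8 * j + int (p k))) = 2 * of_int t"
proof -
  define s q where "s = (\<Prod>i<k. int (p i))" and "q = int (p k)"
  have "odd (p i)" if "i \<le> k" for i
    using assms(3)[OF that] by (auto elim!: oddE) presburger+
  then have "odd s" "odd q" "prime q"
    using assms(2)[of k] by (auto simp: s_def q_def even_prod_iff)
  then obtain d where d: "s ^ 2 * q * (8 * q * int n + 8 * j + q) = 8 * d + 1"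
    and not_square: "\<not> (\<exists>x. x ^ 2 = 8 * d + 1)"
    using eq_8d_plus_1_non_square assms(4) q_def by metis
  have "(\<Prod>i<k. int (p i) ^ 2) = s ^ 2"
    by (simp add: s_def prod_power_distrib)
  then have N: "3 ^ m * (\<Prod>i<k. int (p i) ^ 2) * int (p k) * (8 * int (p k) * int n + 8 * j + int (p k))
      = 3 ^ m * (8 * d + 1)"
    unfolding q_def[symmetric] using d by (simp add: mult.assoc)
  show ?thesis
    unfolding N by (rule Jstar6_even_if_not_square[OF assms(1) not_square])
qed

end
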